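(* For any $q\ge1$, let $u_{n,q}$ (resp. $v_{n,q}$) be the total number of occurrences of the letter $1$ in all words of $\mathcal{W}^q_n$ (resp. of $\mathcal{B}_n(1^{q+1})$). Then $$\lim_{n\to\infty}\frac{u_{n,q}-v_{n,q}}{n\cdot f_{n+q+1,q+1}}=0.$$
   Context: For $q\ge1$, a binary word is $q$-decreasing if for every maximal run of $0$s, of length $a>0$, together with the (possibly empty) maximal run of $1$s immediately following it, of length $b$, one has $q\cdot a>b$; $\mathcal{W}^q_n$ is the set of $q$-decreasing words of length $n$. $\mathcal{B}_n(1^{q+1})$ is the set of binary words of length $n$ with no factor $1^{q+1}$. The $k$-generalized Fibonacci numbers are $f_{n,k}=0$ for $0\le n\le k-2$, $f_{k-1,k}=1$, and $f_{n,k}=\sum_{i=1}^kf_{n-i,k}$ for $n\ge k$. *)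

theory Defs
  imports Complex_Main "HOL-Library.Sublist"
begin

text \<open>Binary words are modelled as bool lists: True is the letter 1, False the letter 0.\<close>

text \<open>q-decreasing: every maximal 0-run w[i..<j] (length a = j - i > 0) together with the
  maximal 1-run w[j..<k] immediately following it (length b = k - j, possibly 0)
  satisfies q * a > b.\<close>
definition q_decreasing :: "nat \<Rightarrow> bool list \<Rightarrow> bool" where
  "q_decreasing q w \<longleftrightarrow>
     (\<forall>i j k. i < j \<and> j \<le> k \<and> k \<le> length w
        \<and> (i = 0 \<or> w ! (i - 1))
        \<and> (\<forall>t\<in>{i..<j}. \<not> w ! t)
        \<and> (\<forall>t\<in>{j..<k}. w ! t)
        \<and> (k = length w \<or> \<not> w ! k)
        \<and> (j = k \<longrightarrow> k = length w)
        \<longrightarrow> q * (j - i) > k - j)"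

definition W :: "nat \<Rightarrow> nat \<Rightarrow> bool list set" where
  "W q n = {w. length w = n \<and> q_decreasing q w}"

definition B :: "nat \<Rightarrow> nat \<Rightarrow> bool list set" where
  "B q n = {w. length w = n \<and> \<not> sublist (replicate (q + 1) True) w}"

definition u :: "nat \<Rightarrow> nat \<Rightarrow> nat" where
  "u n q = (\<Sum>w\<in>W q n. count_list w True)"

definition v :: "nat \<Rightarrow> nat \<Rightarrow> nat" where
  "v n q = (\<Sum>w\<in>B q n. count_list w True)"

function kfib :: "nat \<Rightarrow> nat \<Rightarrow> nat" where
  "kfib n k = (if n + 1 < k then 0 else if n + 1 = k then 1
               else (\<Sum>i\<in>{1..k}. kfib (n - i) k))"
  by auto
termination
  by (relation "measure fst") auto

end

theory Submission
  imports Defs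
begin

(* Every binary word of length n is 1^n or x 0 1^j. Such a word avoids 1^(q+1) iff x does and
  j <= q. It is q-decreasing iff x is and j < q (1 + t), t the number of trailing zeros of x:
  for j < q only x matters, while for j = q + i the word must end in 0 0 1^(q+i), and deleting
  one 0 and q 1s maps these words bijectively onto the q-decreasing words y 0 1^i of length
  m = n - q - 1, i.e. onto all of them except 1^m. So, counting with any weight that depends on
  the number of 1s, both families satisfy s(m+q+1) = sum_{j<=q} s(m+q-j), up to the extra word
  1^(m+q+1) and the missing 1^m for q-decreasing words. Hence both families have the same size,
  and d_n = u_n - v_n vanishes for n <= q and satisfies d(m+q+1) = 1 + sum_{j<=q} d(m+q-j).
  Since f_{n+q+1,q+1} is positive and satisfies the homogeneous recurrence, induction gives
  0 <= d_n < f_{n+q+1,q+1}, so the quotient is at most 1/n. *)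

lemma finite_bool_lists_length: "finite {w :: bool list. length w = n}"
  using finite_lists_length_eq[of "UNIV :: bool set" n] by simp

lemma lists_length_Suc_snoc:
  "{w :: bool list. length w = Suc n} =
     (\<lambda>x. x @ [False]) ` {x. length x = n} \<union> (\<lambda>x. x @ [True]) ` {x. length x = n}"
proof (intro equalityI subsetI)
  fix w :: "bool list"
  assume "w \<in> {w. length w = Suc n}"
  then obtain x b where "w = x @ [b]" "length x = n"
    by (cases w rule: rev_exhaust) auto
  then show "w \<in> (\<lambda>x. x @ [False]) ` {x. length x = n} \<union> (\<lambda>x. x @ [True]) ` {x. length x = n}"
    by (cases b) auto
qed auto

lemma sum_lists_length_snoc:
  "(\<Sum>w | length w = Suc n. h w) =
     (\<Sum>x | length x = n. h (x @ [False])) + (\<Sum>x | length x = n. h (x @ [True]))"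
  unfolding lists_length_Suc_snoc
  by (subst sum.union_disjoint) (auto simp: sum.reindex inj_on_def finite_bool_lists_length)

lemma sum_lists_length_last_block:
  "(\<Sum>w | length w = n. f w) =
     f (replicate n True) + (\<Sum>j<n. \<Sum>x | length x = n - 1 - j. f (x @ False # replicate j True))"
proof (induction n arbitrary: f)
  case 0
  have "{w :: bool list. length w = 0} = {[]}" by auto
  then show ?case by simp
next
  case (Suc n)
  have "(\<Sum>w | length w = Suc n. f w) =
      (\<Sum>x | length x = n. f (x @ [False])) + (\<Sum>x | length x = n. f (x @ [True]))"
    by (rule sum_lists_length_snoc)
  also have "(\<Sum>x | length x = n. f (x @ [True])) = f (replicate (Suc n) True) +
      (\<Sum>j<n. \<Sum>x | length x = n - 1 - j. f (x @ False # replicate (Suc j) True))"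
    using Suc.IH[of "\<lambda>x. f (x @ [True])"] by (simp add: replicate_append_same)
  finally show ?case
    unfolding sum.lessThan_Suc_shift by (simp add: ac_simps)
qed

lemma sum_filter_lists_length_last_block:
  "(\<Sum>w | length w = n \<and> P w. f w) =
     (if P (replicate n True) then f (replicate n True) else 0) +
     (\<Sum>j<n. \<Sum>x | length x = n - 1 - j \<and> P (x @ False # replicate j True).
        f (x @ False # replicate j True))"
proof -
  have filter: "(\<Sum>w | length w = k \<and> Q w. g w) = (\<Sum>w | length w = k. if Q w then g w else 0)"
    for k and Q :: "bool list \<Rightarrow> bool" and g :: "bool list \<Rightarrow> 'a"
    using sum.inter_filter[OF finite_bool_lists_length, where g = g and P = Q] by simp
  show ?thesis
    unfolding filter by (rule sum_lists_length_last_block)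
qed

definition trailing_zeros :: "bool list \<Rightarrow> nat" where
  "trailing_zeros x = length (takeWhile Not (rev x))"

lemma trailing_zeros_le_length: "trailing_zeros x \<le> length x"
  unfolding trailing_zeros_def by (metis length_rev length_takeWhile_le)

lemma trailing_zeros_Nil [simp]: "trailing_zeros [] = 0"
  by (simp add: trailing_zeros_def)

lemma trailing_zeros_snoc_False [simp]: "trailing_zeros (x @ [False]) = Suc (trailing_zeros x)"
  by (simp add: trailing_zeros_def)

lemma trailing_zeros_snoc_True [simp]: "trailing_zeros (x @ [True]) = 0"
  by (simp add: trailing_zeros_def)

lemma nth_trailing_zero:
  assumes "length x - trailing_zeros x \<le> t" "t < length x"
  shows "\<not> x ! t"
proof -
  have s: "length x - Suc t < length (takeWhile Not (rev x))"
    using assms trailing_zeros_le_length[of x] unfolding trailing_zeros_def by linarith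
  then have "\<not> rev x ! (length x - Suc t)"
    using nth_mem set_takeWhileD takeWhile_nth by metis
  then show ?thesis
    using assms(2) by (simp add: rev_nth)
qed

lemma nth_before_trailing_zeros:
  assumes "trailing_zeros x < length x"
  shows "x ! (length x - Suc (trailing_zeros x))"
proof -
  have "\<not> Not (rev x ! trailing_zeros x)"
    using assms unfolding trailing_zeros_def by (metis length_rev nth_length_takeWhile)
  then show ?thesis
    using assms by (simp add: rev_nth)
qed

lemma trailing_zeros_start_iff:
  assumes "i \<le> length x"
  shows "i = length x - trailing_zeros x \<longleftrightarrow> (i = 0 \<or> x ! (i - 1)) \<and> (\<forall>t\<in>{i..<length x}. \<not> x ! t)"
proof
  assume "i = length x - trailing_zeros x"
  then show "(i = 0 \<or> x ! (i - 1)) \<and> (\<forall>t\<in>{i..<length x}. \<not> x ! t)"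
    using nth_trailing_zero[of x] nth_before_trailing_zeros[of x]
    by (cases "trailing_zeros x < length x") (auto simp: Suc_diff_Suc)
next
  assume i: "(i = 0 \<or> x ! (i - 1)) \<and> (\<forall>t\<in>{i..<length x}. \<not> x ! t)"
  have "\<not> i < length x - trailing_zeros x"
  proof
    assume "i < length x - trailing_zeros x"
    then have "trailing_zeros x < length x" "length x - Suc (trailing_zeros x) \<in> {i..<length x}"
      by auto
    then show False
      using i nth_before_trailing_zeros by blast
  qed
  moreover have "\<not> length x - trailing_zeros x < i"
  proof
    assume less: "length x - trailing_zeros x < i"
    then have "\<not> x ! (i - 1)"
      using assms by (intro nth_trailing_zero) auto
    then show False
      using i less by auto
  qed
  ultimately show "i = length x - trailing_zeros x" by simp
qed

definition zero_one_block :: "bool list \<Rightarrow> nat \<Rightarrow> nat \<Rightarrow> nat \<Rightarrow> bool" where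
  "zero_one_block w i j k \<longleftrightarrow>
     i < j \<and> j \<le> k \<and> k \<le> length w
     \<and> (i = 0 \<or> w ! (i - 1))
     \<and> (\<forall>t\<in>{i..<j}. \<not> w ! t)
     \<and> (\<forall>t\<in>{j..<k}. w ! t)
     \<and> (k = length w \<or> \<not> w ! k)
     \<and> (j = k \<longrightarrow> k = length w)"

lemma q_decreasing_iff_blocks:
  "q_decreasing q w \<longleftrightarrow> (\<forall>i j k. zero_one_block w i j k \<longrightarrow> k - j < q * (j - i))"
  unfolding q_decreasing_def zero_one_block_def by blast

lemma q_decreasing_iff_proper_blocks:
  assumes "1 \<le> q"
  shows "q_decreasing q w \<longleftrightarrow> (\<forall>i j k. zero_one_block w i j k \<and> j < k \<longrightarrow> k - j < q * (j - i))"
  unfolding q_decreasing_iff_blocks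
  using assms by (auto simp: zero_one_block_def le_less)

lemma nth_append_block:
  assumes "t < Suc (length x + j)"
  shows "(x @ False # replicate j True) ! t = (if t < length x then x ! t else t \<noteq> length x)"
  using assms by (auto simp: nth_append nth_Cons split: nat.split)

lemma zero_one_block_append_block_left:
  assumes "k \<le> length x"
  shows "zero_one_block (x @ False # replicate j True) i j' k \<longleftrightarrow> zero_one_block x i j' k \<and> j' < k"
  using assms by (auto simp: zero_one_block_def nth_append_block)

lemma zero_one_block_append_block_right:
  assumes "length x < k"
  shows "zero_one_block (x @ False # replicate j True) i j' k \<longleftrightarrow>
    i = length x - trailing_zeros x \<and> j' = Suc (length x) \<and> k = Suc (length x + j)"
proof -
  define w where "w = x @ False # replicate j True"
  have len: "length w = Suc (length x + j)"
    by (simp add: w_def)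
  have zero: "\<not> w ! length x"
    by (simp add: w_def)
  have prefix: "w ! t = x ! t" if "t < length x" for t
    using that by (simp add: w_def nth_append)
  have ones_after: "w ! t" if "length x < t" "t < length w" for t
    using that by (simp add: w_def nth_append_block)
  have "i = length x - trailing_zeros x \<and> j' = Suc (length x) \<and> k = length w"
    if "zero_one_block w i j' k"
  proof -
    from that have ij': "i < j'" and j'k: "j' \<le> k" and k: "k \<le> length w"
      and before: "i = 0 \<or> w ! (i - 1)" and zeros: "\<forall>t\<in>{i..<j'}. \<not> w ! t"
      and ones: "\<forall>t\<in>{j'..<k}. w ! t" and after: "k = length w \<or> \<not> w ! k"
      unfolding zero_one_block_def by blast+
    have "length x < j'"
      using zero ones assms by (meson atLeastLessThan_iff not_le)
    moreover have "i \<le> length x"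
      using zeros ones_after ij' j'k k by (meson atLeastLessThan_iff le_less_trans not_le order.refl)
    moreover have "\<not> Suc (length x) < j'"
      using zeros ones_after \<open>i \<le> length x\<close> j'k k
      by (meson atLeastLessThan_iff le_SucI less_le_trans not_less_eq_eq lessI)
    moreover have "k = length w"
      using after ones_after assms k by force
    moreover have "i = 0 \<or> x ! (i - 1)"
      using before prefix[of "i - 1"] \<open>i \<le> length x\<close> by (cases "i = 0") auto
    moreover have "\<forall>t\<in>{i..<length x}. \<not> x ! t"
      using zeros prefix \<open>length x < j'\<close> by fastforce
    ultimately show ?thesis
      by (simp add: trailing_zeros_start_iff)
  qed
  moreover have "zero_one_block w (length x - trailing_zeros x) (Suc (length x)) (length w)"
    using trailing_zeros_start_iff[of "length x - trailing_zeros x" x]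
    by (auto simp: zero_one_block_def w_def nth_append_block)
  ultimately show ?thesis
    unfolding w_def[symmetric] len by blast
qed

lemma q_decreasing_append_block_iff:
  assumes "1 \<le> q"
  shows "q_decreasing q (x @ False # replicate j True) \<longleftrightarrow>
    q_decreasing q x \<and> j < q * Suc (trailing_zeros x)"
proof -
  let ?w = "x @ False # replicate j True"
  let ?last = "\<lambda>i j' k. i = length x - trailing_zeros x \<and> j' = Suc (length x) \<and> k = Suc (length x + j)"
  have blocks: "zero_one_block ?w i j' k \<longleftrightarrow> zero_one_block x i j' k \<and> j' < k \<or> ?last i j' k"
    for i j' k
  proof (cases "k \<le> length x")
    case True
    then show ?thesis
      by (simp add: zero_one_block_append_block_left)
  next
    case False
    moreover have "k \<le> length x" if "zero_one_block x i j' k"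
      using that by (simp add: zero_one_block_def)
    ultimately show ?thesis
      by (auto simp: zero_one_block_append_block_right)
  qed
  have "Suc (length x) - (length x - trailing_zeros x) = Suc (trailing_zeros x)"
    using trailing_zeros_le_length[of x] by simp
  then show ?thesis
    unfolding q_decreasing_iff_blocks[of q ?w] q_decreasing_iff_proper_blocks[OF assms, of x] blocks
    by (simp add: imp_disjL all_conj_distrib)
qed

lemma q_decreasing_replicate_True: "q_decreasing q (replicate n True)"
  unfolding q_decreasing_iff_blocks zero_one_block_def by fastforce

lemma q_decreasing_if_length_le:
  assumes "1 \<le> q" "length w \<le> q"
  shows "q_decreasing q w"
  unfolding q_decreasing_iff_blocks
proof (intro allI impI)
  fix i j k
  assume "zero_one_block w i j k"
  then have "k - j < q" "q \<le> q * (j - i)"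
    using assms by (auto simp: zero_one_block_def)
  then show "k - j < q * (j - i)" by linarith
qed

lemma W_eq_lists:
  assumes "1 \<le> q" "n \<le> q"
  shows "W q n = {w. length w = n}"
  using assms q_decreasing_if_length_le by (auto simp: W_def)

lemma W_append_short_block:
  assumes "j < q"
  shows "{x. length x = k \<and> q_decreasing q (x @ False # replicate j True)} = W q k"
proof -
  have "j < q * Suc (trailing_zeros x)" for x
    using assms by (simp add: less_le_trans)
  then show ?thesis
    using assms by (auto simp: W_def q_decreasing_append_block_iff)
qed

lemma W_append_long_block:
  assumes "1 \<le> q"
  shows "{x. length x = Suc k \<and> q_decreasing q (x @ False # replicate (q + i) True)} =
    (\<lambda>y. y @ [False]) ` {y. length y = k \<and> q_decreasing q (y @ False # replicate i True)}"
proof -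
  have "q_decreasing q (y @ [False] @ False # replicate (q + i) True) \<longleftrightarrow>
      q_decreasing q (y @ False # replicate i True)" for y
    using q_decreasing_append_block_iff[OF assms, of "y @ [False]"]
      q_decreasing_append_block_iff[OF assms, of y 0] q_decreasing_append_block_iff[OF assms, of y i]
    using assms by simp
  moreover have "\<not> q_decreasing q (y @ [True] @ False # replicate (q + i) True)" for y
    using q_decreasing_append_block_iff[OF assms, of "y @ [True]"] by simp
  ultimately show ?thesis
    using lists_length_Suc_snoc[of k] by (auto simp: set_eq_iff)
qed

lemma not_q_decreasing_long_block:
  assumes "1 \<le> q"
  shows "\<not> q_decreasing q (False # replicate (q + i) True)"
  using q_decreasing_append_block_iff[OF assms, of "[]"] by simp

lemma count_list_replicate_same: "count_list (replicate n a) a = n"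
  by (induction n) auto

lemma sum_lessThan_add: "(\<Sum>j<q + (n :: nat). g j) = (\<Sum>j<q. g j) + (\<Sum>i<n. g (q + i))"
  by (induction n) (simp_all add: ac_simps)

lemma sum_W_last_block:
  "(\<Sum>w\<in>W q n. g (count_list w True)) = g n +
    (\<Sum>j<n. \<Sum>x | length x = n - 1 - j \<and> q_decreasing q (x @ False # replicate j True).
      g (count_list x True + j))"
  unfolding W_def using sum_filter_lists_length_last_block[where f = "\<lambda>w. g (count_list w True)"]
  by (simp add: q_decreasing_replicate_True count_list_replicate_same)

lemma sum_W_long_blocks:
  fixes h :: "nat \<Rightarrow> 'a::comm_monoid_add"
  assumes "1 \<le> q"
  shows "(\<Sum>i<Suc m. \<Sum>x | length x = m - i \<and> q_decreasing q (x @ False # replicate (q + i) True).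
      h (count_list x True + (q + i))) + h (m + q) =
    (\<Sum>x\<in>W q m. h (count_list x True + q))"
proof -
  let ?S = "\<lambda>g j k. \<Sum>x | length x = k \<and> q_decreasing q (x @ False # replicate j True).
    g (count_list x True + j)"
  have long: "?S h (q + i) (Suc k) = ?S (\<lambda>c. h (c + q)) i k" for i k
    unfolding W_append_long_block[OF assms]
    by (subst sum.reindex) (auto simp: inj_on_def ac_simps)
  have long_empty: "?S h (q + i) 0 = 0" for i
  proof -
    have "{x. length x = 0 \<and> q_decreasing q (x @ False # replicate (q + i) True)} = {}"
      using not_q_decreasing_long_block[OF assms] by simp
    then show ?thesis
      by (simp only: sum.empty)
  qed
  have "(\<Sum>i<Suc m. ?S h (q + i) (m - i)) = (\<Sum>i<m. ?S h (q + i) (m - i))"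
    by (simp only: sum.lessThan_Suc diff_self_eq_0 long_empty add_0_right)
  also have "\<dots> = (\<Sum>i<m. ?S (\<lambda>c. h (c + q)) i (m - 1 - i))"
  proof (rule sum.cong)
    fix i
    assume "i \<in> {..<m}"
    then have "m - i = Suc (m - 1 - i)" by simp
    then show "?S h (q + i) (m - i) = ?S (\<lambda>c. h (c + q)) i (m - 1 - i)"
      by (simp only: long)
  qed simp
  finally show ?thesis
    using sum_W_last_block[where q = q and n = m and g = "\<lambda>c. h (c + q)"] by (simp add: ac_simps)
qed

lemma sum_W_recurrence:
  fixes h :: "nat \<Rightarrow> 'a::comm_monoid_add"
  assumes "1 \<le> q"
  shows "(\<Sum>w\<in>W q (Suc (m + q)). h (count_list w True)) + h (m + q) =
    h (Suc (m + q)) + (\<Sum>j\<le>q. \<Sum>x\<in>W q (m + q - j). h (count_list x True + j))"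
proof -
  let ?S = "\<lambda>j k. \<Sum>x | length x = k \<and> q_decreasing q (x @ False # replicate j True).
    h (count_list x True + j)"
  have shift: "q + Suc m - 1 - j = m + q - j" "m + q - (q + j) = m - j" for j
    by simp_all
  have short: "?S j (m + q - j) = (\<Sum>x\<in>W q (m + q - j). h (count_list x True + j))" if "j < q" for j
    by (simp only: W_append_short_block[OF that])
  have "(\<Sum>w\<in>W q (q + Suc m). h (count_list w True)) = h (q + Suc m) + (\<Sum>j<q + Suc m. ?S j (m + q - j))"
    unfolding sum_W_last_block shift ..
  also have "(\<Sum>j<q + Suc m. ?S j (m + q - j)) =
      (\<Sum>j<q. \<Sum>x\<in>W q (m + q - j). h (count_list x True + j)) + (\<Sum>i<Suc m. ?S (q + i) (m - i))"
    unfolding sum_lessThan_add shift using short by simp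
  finally have "(\<Sum>w\<in>W q (q + Suc m). h (count_list w True)) + h (m + q) =
      h (q + Suc m) + ((\<Sum>j<q. \<Sum>x\<in>W q (m + q - j). h (count_list x True + j)) +
        ((\<Sum>i<Suc m. ?S (q + i) (m - i)) + h (m + q)))"
    by (simp only: add.assoc)
  also have "\<dots> = h (q + Suc m) + ((\<Sum>j<q. \<Sum>x\<in>W q (m + q - j). h (count_list x True + j)) +
      (\<Sum>x\<in>W q m. h (count_list x True + q)))"
    unfolding sum_W_long_blocks[OF assms] ..
  also have "\<dots> = h (q + Suc m) + (\<Sum>j\<le>q. \<Sum>x\<in>W q (m + q - j). h (count_list x True + j))"
    by (simp flip: lessThan_Suc_atMost)
  finally show ?thesis
    by (simp add: add.commute[of q m])
qed

lemma sublist_append_Cons_notin: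
  assumes "a \<notin> set xs"
  shows "sublist xs (ys @ a # zs) \<longleftrightarrow> sublist xs ys \<or> sublist xs zs"
proof -
  have "xs = []" if "prefix xs (a # zs)"
    using that assms by (cases xs) auto
  moreover have "sublist xs ys" if "xs = xs1 @ xs2" "suffix xs1 ys" "prefix xs2 (a # zs)" for xs1 xs2
    using that assms by (cases xs2) (auto simp: suffix_imp_sublist)
  ultimately show ?thesis
    unfolding sublist_append sublist_Cons_right by auto
qed

lemma sublist_replicate_replicate: "sublist (replicate m a) (replicate n a) \<longleftrightarrow> m \<le> n"
proof
  assume "m \<le> n"
  then have "replicate n a = replicate m a @ replicate (n - m) a"
    by (simp flip: replicate_add)
  then show "sublist (replicate m a) (replicate n a)"
    by (metis sublist_append_rightI)
qed (metis length_replicate sublist_length_le)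

lemma B_append_block:
  "{x. length x = k \<and> \<not> sublist (replicate (Suc q) True) (x @ False # replicate j True)} =
    (if j \<le> q then B q k else {})"
  by (auto simp del: replicate_Suc simp: B_def sublist_append_Cons_notin sublist_replicate_replicate)

lemma B_eq_lists:
  assumes "n \<le> q"
  shows "B q n = {w. length w = n}"
  using assms sublist_length_le by (fastforce simp: B_def)

lemma sum_B_recurrence:
  fixes h :: "nat \<Rightarrow> 'a::comm_monoid_add"
  assumes "q \<le> n"
  shows "(\<Sum>w\<in>B q (Suc n). h (count_list w True)) =
    (\<Sum>j\<le>q. \<Sum>x\<in>B q (n - j). h (count_list x True + j))"
proof -
  let ?P = "\<lambda>w. \<not> sublist (replicate (Suc q) True) w"
  have "(\<Sum>w\<in>B q (Suc n). h (count_list w True)) =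
      (\<Sum>j<Suc n. \<Sum>x | length x = n - j \<and> ?P (x @ False # replicate j True).
        h (count_list (x @ False # replicate j True) True))"
    unfolding B_def
    by (subst sum_filter_lists_length_last_block)
      (use assms in \<open>simp del: replicate_Suc add: sublist_replicate_replicate\<close>)
  also have "\<dots> = (\<Sum>j<Suc n. if j \<le> q then \<Sum>x\<in>B q (n - j). h (count_list x True + j) else 0)"
    by (rule sum.cong) (simp_all del: replicate_Suc add: B_append_block count_list_replicate_same)
  also have "\<dots> = (\<Sum>j\<le>q. \<Sum>x\<in>B q (n - j). h (count_list x True + j))"
    using assms by (intro sum.mono_neutral_cong_right) auto
  finally show ?thesis .
qed

lemma kbonacci_recurrence_unique:
  assumes "\<And>n. n \<le> q \<Longrightarrow> s n = t n"
    and "\<And>m. s (Suc (m + q)) = (\<Sum>j\<le>q. s (m + q - j))"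
    and "\<And>m. t (Suc (m + q)) = (\<Sum>j\<le>q. t (m + q - j))"
  shows "s n = t n"
proof (induction n rule: less_induct)
  case (less n)
  show ?case
  proof (cases "n \<le> q")
    case False
    then obtain m where n: "n = Suc (m + q)"
      by (metis add.commute less_imp_Suc_add not_le)
    then show ?thesis
      using assms(2,3) less by (simp add: n)
  qed (rule assms(1))
qed

lemma kbonacci_recurrence_bound:
  fixes d K :: "nat \<Rightarrow> int"
  assumes "1 \<le> q"
    and d_init: "\<And>n. n \<le> q \<Longrightarrow> d n = 0"
    and d_rec: "\<And>m. d (Suc (m + q)) = 1 + (\<Sum>j\<le>q. d (m + q - j))"
    and K_pos: "\<And>n. 0 < K n"
    and K_rec: "\<And>m. K (Suc (m + q)) = (\<Sum>j\<le>q. K (m + q - j))"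
  shows "0 \<le> d n \<and> d n < K n"
proof (induction n rule: less_induct)
  case (less n)
  show ?case
  proof (cases "n \<le> q")
    case True
    then show ?thesis
      using d_init K_pos by simp
  next
    case False
    then obtain m where n: "n = Suc (m + q)"
      by (metis add.commute less_imp_Suc_add not_le)
    have IH: "0 \<le> d (m + q - j)" "d (m + q - j) \<le> K (m + q - j) - 1" for j
      using less n by force+
    have "0 \<le> (\<Sum>j\<le>q. d (m + q - j))"
      using IH by (simp add: sum_nonneg)
    moreover have "(\<Sum>j\<le>q. d (m + q - j)) \<le> (\<Sum>j\<le>q. K (m + q - j) - 1)"
      using IH by (intro sum_mono) simp
    moreover have "(\<Sum>j\<le>q. K (m + q - j) - 1) = K n - (q + 1)"
      by (simp add: n K_rec sum_subtractf)
    ultimately show ?thesis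
      using assms(1) by (simp add: n d_rec)
  qed
qed

declare kfib.simps [simp del]

lemma kfib_recurrence:
  assumes "k \<le> n"
  shows "kfib n k = (\<Sum>j<k. kfib (n - Suc j) k)"
  using assms by (subst kfib.simps) (simp add: sum.atLeast1_atMost_eq)

lemma kfib_pos:
  assumes "0 < k" "k \<le> Suc n"
  shows "0 < kfib n k"
  using assms
proof (induction n rule: less_induct)
  case (less n)
  show ?case
  proof (cases "Suc n = k")
    case True
    then show ?thesis by (subst kfib.simps) simp
  next
    case False
    then have "kfib (n - 1) k \<le> (\<Sum>j<k. kfib (n - Suc j) k)"
      using member_le_sum[of 0 "{..<k}" "\<lambda>j. kfib (n - Suc j) k"] less.prems by simp
    moreover have "0 < kfib (n - 1) k"
      using less False by (intro less.IH) auto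
    moreover have "k \<le> n"
      using False less.prems by simp
    ultimately show ?thesis
      by (simp add: kfib_recurrence)
  qed
qed

lemma card_W_recurrence:
  assumes "1 \<le> q"
  shows "card (W q (Suc (m + q))) = (\<Sum>j\<le>q. card (W q (m + q - j)))"
  using sum_W_recurrence[OF assms, of "\<lambda>_. 1 :: nat" m] by simp

lemma card_B_recurrence: "card (B q (Suc (m + q))) = (\<Sum>j\<le>q. card (B q (m + q - j)))"
  using sum_B_recurrence[of q "m + q" "\<lambda>_. 1 :: nat"] by simp

lemma card_W_eq_card_B:
  assumes "1 \<le> q"
  shows "card (W q n) = card (B q n)"
  by (rule kbonacci_recurrence_unique[where q = q and s = "\<lambda>n. card (W q n)" and t = "\<lambda>n. card (B q n)"])
    (simp_all add: W_eq_lists[OF assms] B_eq_lists card_W_recurrence[OF assms] card_B_recurrence)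

lemma u_recurrence:
  assumes "1 \<le> q"
  shows "u (Suc (m + q)) q = 1 + (\<Sum>j\<le>q. u (m + q - j) q + card (W q (m + q - j)) * j)"
  using sum_W_recurrence[OF assms, of "\<lambda>c. c" m] by (simp add: u_def sum.distrib)

lemma v_recurrence: "v (Suc (m + q)) q = (\<Sum>j\<le>q. v (m + q - j) q + card (B q (m + q - j)) * j)"
  using sum_B_recurrence[of q "m + q" "\<lambda>c. c"] by (simp add: v_def sum.distrib)

lemma u_minus_v_recurrence:
  assumes "1 \<le> q"
  shows "int (u (Suc (m + q)) q) - int (v (Suc (m + q)) q) =
    1 + (\<Sum>j\<le>q. int (u (m + q - j) q) - int (v (m + q - j) q))"
  by (simp add: u_recurrence[OF assms] v_recurrence card_W_eq_card_B[OF assms] sum.distrib sum_subtractf)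

lemma u_eq_v_init:
  assumes "1 \<le> q" "n \<le> q"
  shows "u n q = v n q"
  using assms by (simp add: u_def v_def W_eq_lists B_eq_lists)

lemma kfib_shifted_recurrence:
  "kfib (Suc (m + q) + q + 1) (q + 1) = (\<Sum>j\<le>q. kfib (m + q - j + q + 1) (q + 1))"
proof -
  have "kfib (Suc (m + q) + q + 1) (q + 1) = (\<Sum>j<Suc q. kfib (Suc (m + q) + q + 1 - Suc j) (q + 1))"
    by (simp add: kfib_recurrence)
  also have "\<dots> = (\<Sum>j\<le>q. kfib (m + q - j + q + 1) (q + 1))"
    unfolding lessThan_Suc_atMost by (intro sum.cong) (auto simp: Suc_diff_le)
  finally show ?thesis .
qed

lemma tendsto_div_real_mult_zero:
  fixes a b :: "nat \<Rightarrow> real"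
  assumes "\<And>n. 0 \<le> a n" "\<And>n. a n \<le> b n"
  shows "(\<lambda>n. a n / (real n * b n)) \<longlonglongrightarrow> 0"
proof (rule tendsto_sandwich[of "\<lambda>_. 0" _ sequentially "\<lambda>n. 1 / real n"])
  have "a n / (real n * b n) \<le> 1 / real n" for n
  proof (cases "b n = 0")
    case False
    then have "a n / (real n * b n) \<le> b n / (real n * b n)"
      using assms[of n] by (intro divide_right_mono) auto
    then show ?thesis
      using False by simp
  qed (use assms[of n] in simp)
  then show "\<forall>\<^sub>F n in sequentially. a n / (real n * b n) \<le> 1 / real n"
    by simp
  have "0 \<le> b n" for n
    using assms order_trans by blast
  then show "\<forall>\<^sub>F n in sequentially. 0 \<le> a n / (real n * b n)"
    using assms by (simp add: always_eventually)
qed (auto simp: lim_1_over_n)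

theorem corollary5:
  fixes q :: nat
  assumes "q \<ge> 1"
  shows "(\<lambda>n. (real (u n q) - real (v n q)) / (real n * real (kfib (n + q + 1) (q + 1))))
           \<longlonglongrightarrow> 0"
proof -
  define d where "d n = int (u n q) - int (v n q)" for n
  define K where "K n = int (kfib (n + q + 1) (q + 1))" for n
  have bound: "0 \<le> d n \<and> d n < K n" for n
  proof (rule kbonacci_recurrence_bound[OF assms])
    show "d n = 0" if "n \<le> q" for n
      using u_eq_v_init[OF assms that] by (simp add: d_def)
    show "d (Suc (m + q)) = 1 + (\<Sum>j\<le>q. d (m + q - j))" for m
      using u_minus_v_recurrence[OF assms] by (simp add: d_def)
    show "0 < K n" for n
      using kfib_pos[of "q + 1" "n + q + 1"] by (simp add: K_def)
    show "K (Suc (m + q)) = (\<Sum>j\<le>q. K (m + q - j))" for m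
      unfolding K_def kfib_shifted_recurrence by simp
  qed
  have "(\<lambda>n. real_of_int (d n) / (real n * real_of_int (K n))) \<longlonglongrightarrow> 0"
    using bound by (intro tendsto_div_real_mult_zero) (simp_all add: less_imp_le)
  then show ?thesis
    by (simp add: d_def K_def)
qed

end
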